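(* Let $S$ be the family of $d$-dimensional cubes in $\mathbb{R}^d$ (of any orientation). For every bounded Borel set $C\subseteq\mathbb{R}^d$ there exists an $S$-continuous knife function on $C$ from $\emptyset$ to $C$.
   Context: A knife function on $C$ from $C_0$ to $C_1$ is a map $K$ from $[0,1]$ to Borel subsets of $C$ with $K(t)\subseteq K(t')$ for $t\le t'$, $K(0)=C_0$, $K(1)=C_1$; $\overline K(t):=C\setminus K(t)$. A piece $s$ is an $\epsilon$-predecessor of a piece $s'$ if $s\subseteq s'$ and $\mathrm{Lebesgue}(s'\setminus s)<\epsilon$. $K$ is $S$-continuous if for every $\epsilon>0$ there is $\delta>0$ such that for all $t,t'\in[0,1]$ with $|t'-t|<\delta$: (a) every $S$-piece $s_{t'}\subseteq K(t')$ has an $\epsilon$-predecessor $S$-piece $s_t\subseteq K(t)$; and (b) every $S$-piece $s_{t'}\subseteq\overline K(t')$ has an $\epsilon$-predecessor $S$-piece $s_t\subseteq\overline K(t)$. *)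

theory Defs
  imports "HOL-Analysis.Analysis"
begin

definition oriented_cube :: "'a::euclidean_space set \<Rightarrow> bool" where
  "oriented_cube Q \<longleftrightarrow> (\<exists>c a (f::'a \<Rightarrow> 'a). a > 0 \<and> orthogonal_transformation f \<and>
      Q = (\<lambda>x. c + f x) ` cbox 0 (\<Sum>b\<in>Basis. a *\<^sub>R b))"

definition cube_piece :: "'a::euclidean_space set \<Rightarrow> bool" where
  "cube_piece s \<longleftrightarrow> s = {} \<or> oriented_cube s"

definition eps_predecessor :: "real \<Rightarrow> 'a::euclidean_space set \<Rightarrow> 'a set \<Rightarrow> bool" where
  "eps_predecessor \<epsilon> s s' \<longleftrightarrow> s \<subseteq> s' \<and> measure lebesgue (s' - s) < \<epsilon>"

definition knife_function ::
  "'a::euclidean_space set \<Rightarrow> 'a set \<Rightarrow> 'a set \<Rightarrow> (real \<Rightarrow> 'a set) \<Rightarrow> bool" where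
  "knife_function C C0 C1 K \<longleftrightarrow>
     (\<forall>t\<in>{0..1}. K t \<in> sets borel \<and> K t \<subseteq> C) \<and>
     (\<forall>t\<in>{0..1}. \<forall>t'\<in>{0..1}. t \<le> t' \<longrightarrow> K t \<subseteq> K t') \<and>
     K 0 = C0 \<and> K 1 = C1"

definition S_continuous ::
  "('a::euclidean_space set \<Rightarrow> bool) \<Rightarrow> 'a set \<Rightarrow> (real \<Rightarrow> 'a set) \<Rightarrow> bool" where
  "S_continuous S C K \<longleftrightarrow>
     (\<forall>\<epsilon>>0. \<exists>\<delta>>0. \<forall>t\<in>{0..1}. \<forall>t'\<in>{0..1}. \<bar>t' - t\<bar> < \<delta> \<longrightarrow>
        (\<forall>s'. S s' \<and> s' \<subseteq> K t' \<longrightarrow> (\<exists>s. S s \<and> s \<subseteq> K t \<and> eps_predecessor \<epsilon> s s')) \<and>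
        (\<forall>s'. S s' \<and> s' \<subseteq> C - K t' \<longrightarrow> (\<exists>s. S s \<and> s \<subseteq> C - K t \<and> eps_predecessor \<epsilon> s s')))"

end

theory Submission
  imports Defs
begin

text \<open>Sweep a hyperplane through C: K t is the part of C below the hyperplane
  x \<bullet> e = L (2 t - 1), for a unit vector e and L larger than the radius of C.
  A cube of side a lying below height h contains its inscribed ball, so its centre lies below
  height h - a/2. The homothety about the centre with ratio 1 - 4\<eta>/a therefore maps the cube
  onto a subcube below height h - 2\<eta>, and by Bernoulli's inequality it loses at most the
  fraction DIM * 4\<eta>/a of a volume of order a^DIM. Since the cubes inside C have bounded side,
  this loss is O(\<eta>) uniformly; cubes of side at most 4\<eta> are replaced by the empty piece.
  The complement of K t is treated in the same way with -e in place of e.\<close>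

definition rigid_cube :: "'a::euclidean_space \<Rightarrow> ('a \<Rightarrow> 'a) \<Rightarrow> real \<Rightarrow> 'a set" where
  "rigid_cube c f a = (\<lambda>x. c + f x) ` cbox 0 (a *\<^sub>R One)"

lemma oriented_cube_iff_rigid_cube:
  "oriented_cube Q \<longleftrightarrow> (\<exists>c a f. a > 0 \<and> orthogonal_transformation f \<and> Q = rigid_cube c f a)"
  by (simp add: oriented_cube_def rigid_cube_def scaleR_sum_right)

lemma mem_cbox_scaled_One:
  "x \<in> cbox 0 (a *\<^sub>R One) \<longleftrightarrow> (\<forall>i\<in>Basis. 0 \<le> x \<bullet> i \<and> x \<bullet> i \<le> a)"
  by (simp add: mem_box)

lemma
  assumes "orthogonal_transformation f"
  shows compact_rigid_cube: "compact (rigid_cube c f a)"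
    and convex_rigid_cube: "convex (rigid_cube c f a)"
proof -
  have Q: "rigid_cube c f a = (+) c ` f ` cbox 0 (a *\<^sub>R One)"
    by (simp add: rigid_cube_def image_image)
  have f: "linear f" using assms by (rule orthogonal_transformation_linear)
  then have "continuous_on UNIV f"
    by (simp add: linear_continuous_on linear_conv_bounded_linear)
  then show "compact (rigid_cube c f a)"
    unfolding Q by (intro compact_translation compact_continuous_image) (auto intro: continuous_on_subset)
  show "convex (rigid_cube c f a)"
    unfolding Q by (intro convex_translation convex_linear_image f convex_box)
qed

lemma cball_subset_rigid_cube:
  assumes f: "orthogonal_transformation f"
  shows "cball (c + f ((a/2) *\<^sub>R One)) (a/2) \<subseteq> rigid_cube c f a"
proof
  fix y assume y: "y \<in> cball (c + f ((a/2) *\<^sub>R One)) (a/2)"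
  obtain u where u: "f u = y - (c + f ((a/2) *\<^sub>R One))"
    using orthogonal_transformation_surj[OF f] by (metis surj_def)
  have "norm u = dist (c + f ((a/2) *\<^sub>R One)) y"
    using orthogonal_transformation_norm[OF f, of u] u by (simp add: dist_norm norm_minus_commute)
  with y have "norm u \<le> a/2" by simp
  then have "0 \<le> a/2 + u \<bullet> i \<and> a/2 + u \<bullet> i \<le> a" if "i \<in> Basis" for i
    using Basis_le_norm[OF that, of u] by linarith
  then have "(a/2) *\<^sub>R One + u \<in> cbox 0 (a *\<^sub>R One)"
    by (simp add: mem_cbox_scaled_One inner_add_left)
  moreover have "y = c + f ((a/2) *\<^sub>R One + u)"
    using u linear_add[OF orthogonal_transformation_linear[OF f]] by simp
  ultimately show "y \<in> rigid_cube c f a" by (auto simp: rigid_cube_def)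
qed

lemma rigid_cube_subset_cball:
  fixes c :: "'a::euclidean_space" and a :: real
  assumes f: "orthogonal_transformation f"
  shows "rigid_cube c f a \<subseteq> cball c (DIM('a) * a)"
proof
  fix y assume "y \<in> rigid_cube c f a"
  then obtain x where x: "x \<in> cbox 0 (a *\<^sub>R One)" and y: "y = c + f x"
    by (auto simp: rigid_cube_def)
  have "norm x \<le> (\<Sum>i\<in>Basis. \<bar>x \<bullet> i\<bar>)" by (rule norm_le_l1)
  also have "\<dots> \<le> (\<Sum>i\<in>(Basis::'a set). a)"
    using x by (intro sum_mono) (auto simp: mem_cbox_scaled_One)
  finally show "y \<in> cball c (DIM('a) * a)"
    using orthogonal_transformation_norm[OF f] by (simp add: y dist_norm)
qed

lemma measure_rigid_cube_le:
  fixes c :: "'a::euclidean_space" and a :: real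
  assumes "orthogonal_transformation f" "a \<ge> 0"
  shows "measure lebesgue (rigid_cube c f a) \<le> unit_ball_vol DIM('a) * (DIM('a) * a) ^ DIM('a)"
proof -
  have "measure lebesgue (rigid_cube c f a) \<le> measure lebesgue (cball c (DIM('a) * a))"
    using assms by (intro measure_mono_fmeasurable rigid_cube_subset_cball
        lmeasurable_compact[THEN fmeasurableD] compact_rigid_cube) auto
  also have "\<dots> = unit_ball_vol DIM('a) * (DIM('a) * a) ^ DIM('a)"
    using content_cball[of "DIM('a) * a" c] assms(2) by simp
  finally show ?thesis .
qed

lemma homothetic_image_rigid_cube:
  assumes f: "orthogonal_transformation f" and "l \<ge> 0" "a \<ge> 0"
  shows "(\<lambda>y. l *\<^sub>R y + v) ` rigid_cube c f a = rigid_cube (l *\<^sub>R c + v) f (l * a)"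
proof -
  have "(\<lambda>y. l *\<^sub>R y + v) ` rigid_cube c f a
      = (\<lambda>x. (l *\<^sub>R c + v) + f x) ` (\<lambda>x. l *\<^sub>R x) ` cbox 0 (a *\<^sub>R One)"
    unfolding rigid_cube_def image_image
    using linear_add[OF orthogonal_transformation_linear[OF f]]
      linear_cmul[OF orthogonal_transformation_linear[OF f]]
    by (intro image_cong) (simp_all add: algebra_simps)
  also have "(\<lambda>x. l *\<^sub>R x) ` cbox 0 (a *\<^sub>R One) = cbox 0 ((l * a) *\<^sub>R One)"
  proof -
    have "0 \<in> cbox 0 (a *\<^sub>R One)" using assms(3) by (simp add: mem_cbox_scaled_One)
    then show ?thesis using assms(2) by (subst image_smult_cbox) auto
  qed
  finally show ?thesis by (simp add: rigid_cube_def)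
qed

lemma measure_diff_homothetic_image_le:
  fixes S :: "'a::euclidean_space set" and l :: real
  assumes S: "compact S" and l: "0 \<le> l" "l \<le> 1" and sub: "(\<lambda>y. l *\<^sub>R y + v) ` S \<subseteq> S"
  shows "measure lebesgue (S - (\<lambda>y. l *\<^sub>R y + v) ` S) \<le> DIM('a) * (1 - l) * measure lebesgue S"
proof -
  let ?T = "(\<lambda>y. l *\<^sub>R y + v) ` S"
  have "compact ?T" using S by (intro compact_continuous_image continuous_intros)
  then have "measure lebesgue (S - ?T) = measure lebesgue S - measure lebesgue ?T"
    using S sub by (intro measure_Diff) (auto simp: lmeasurable_compact fmeasurableD emeasure_eq_measure2)
  also have "\<dots> = (1 - l ^ DIM('a)) * measure lebesgue S"
    using measure_lebesgue_affine[of l v S] l by (simp add: algebra_simps)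
  also have "\<dots> \<le> DIM('a) * (1 - l) * measure lebesgue S"
    using Bernoulli_inequality[of "l - 1" "DIM('a)"] l by (intro mult_right_mono) (auto simp: algebra_simps)
  finally show ?thesis .
qed

lemma rigid_cube_side_le:
  fixes c :: "'a::euclidean_space"
  assumes f: "orthogonal_transformation f" and "a \<ge> 0" and "rigid_cube c f a \<subseteq> cball 0 B"
  shows "a \<le> 2 * B"
proof -
  have "cball (c + f ((a/2) *\<^sub>R One)) (a/2) \<subseteq> cball 0 B"
    using cball_subset_rigid_cube[OF f] assms(3) by blast
  then have "norm (c + f ((a/2) *\<^sub>R One)) + a/2 \<le> B"
    using assms(2) by (auto simp: cball_subset_cball_iff)
  then show ?thesis using norm_ge_zero[of "c + f ((a/2) *\<^sub>R One)"] by linarith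
qed

lemma inner_centre_rigid_cube_le:
  assumes f: "orthogonal_transformation f" and "a \<ge> 0"
    and "rigid_cube c f a \<subseteq> {z. z \<bullet> e \<le> h}" and e: "norm e = 1"
  shows "(c + f ((a/2) *\<^sub>R One)) \<bullet> e \<le> h - a/2"
proof -
  let ?p = "c + f ((a/2) *\<^sub>R One)"
  have "?p + (a/2) *\<^sub>R e \<in> cball ?p (a/2)"
    using e assms(2) by (simp add: dist_norm)
  then have "(?p + (a/2) *\<^sub>R e) \<bullet> e \<le> h"
    using cball_subset_rigid_cube[OF f] assms(3) by blast
  moreover have "e \<bullet> e = 1"
    using e by (simp add: power2_norm_eq_inner[symmetric])
  ultimately show ?thesis by (simp add: inner_add_left)
qed

lemma central_shrink_rigid_cube:
  fixes c :: "'a::euclidean_space" and f :: "'a \<Rightarrow> 'a" and a l :: real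
  defines "p \<equiv> c + f ((a/2) *\<^sub>R One)"
  assumes f: "orthogonal_transformation f" and a: "a > 0" and l: "0 < l" "l \<le> 1"
  defines "s \<equiv> (\<lambda>y. l *\<^sub>R y + (1 - l) *\<^sub>R p) ` rigid_cube c f a"
  shows "oriented_cube s" and "s \<subseteq> rigid_cube c f a"
    and "measure lebesgue (rigid_cube c f a - s)
           \<le> DIM('a) * (1 - l) * measure lebesgue (rigid_cube c f a)"
    and "rigid_cube c f a \<subseteq> {z. z \<bullet> e \<le> h} \<Longrightarrow> norm e = 1
           \<Longrightarrow> s \<subseteq> {z. z \<bullet> e \<le> h - (1 - l) * a / 2}"
proof -
  have "s = rigid_cube (l *\<^sub>R c + (1 - l) *\<^sub>R p) f (l * a)"
    unfolding s_def using f l a by (intro homothetic_image_rigid_cube) auto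
  then show "oriented_cube s"
    using f l a unfolding oriented_cube_iff_rigid_cube by (metis mult_pos_pos)
  have "p \<in> rigid_cube c f a" using cball_subset_rigid_cube[OF f] a by (force simp: p_def)
  then show sQ: "s \<subseteq> rigid_cube c f a"
    using convex_rigid_cube[OF f] l unfolding s_def by (auto intro: convexD)
  show "measure lebesgue (rigid_cube c f a - s)
      \<le> DIM('a) * (1 - l) * measure lebesgue (rigid_cube c f a)"
    using compact_rigid_cube[OF f] sQ l unfolding s_def by (intro measure_diff_homothetic_image_le) auto
  assume Qh: "rigid_cube c f a \<subseteq> {z. z \<bullet> e \<le> h}" and e: "norm e = 1"
  have pe: "p \<bullet> e \<le> h - a/2"
    unfolding p_def using inner_centre_rigid_cube_le[OF f _ Qh e] a by simp
  show "s \<subseteq> {z. z \<bullet> e \<le> h - (1 - l) * a / 2}"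
  proof
    fix q assume "q \<in> s"
    then obtain y where y: "y \<in> rigid_cube c f a" and q: "q = l *\<^sub>R y + (1 - l) *\<^sub>R p"
      by (auto simp: s_def)
    have "q \<bullet> e = l * (y \<bullet> e) + (1 - l) * (p \<bullet> e)"
      by (simp add: q inner_add_left)
    also have "\<dots> \<le> l * h + (1 - l) * (h - a/2)"
      using l y Qh pe by (intro add_mono mult_left_mono) auto
    finally show "q \<in> {z. z \<bullet> e \<le> h - (1 - l) * a / 2}" by (simp add: algebra_simps)
  qed
qed

lemma rigid_cube_shrink_into_halfspace:
  fixes c :: "'a::euclidean_space"
  assumes f: "orthogonal_transformation f" and a: "a > 0"
    and Qh: "rigid_cube c f a \<subseteq> {z. z \<bullet> e \<le> h}" and e: "norm e = 1" and \<eta>: "\<eta> > 0"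
  obtains s where "cube_piece s" "s \<subseteq> rigid_cube c f a" "s \<subseteq> {z. z \<bullet> e < h - \<eta>}"
    "measure lebesgue (rigid_cube c f a - s)
       \<le> 4 * DIM('a) ^ (DIM('a) + 1) * unit_ball_vol DIM('a) * a ^ (DIM('a) - 1) * \<eta>"
proof -
  define n where "n = DIM('a)"
  define Q where "Q = rigid_cube c f a"
  define V where "V = unit_ball_vol n * n ^ n * a ^ (n - 1)"
  have "n \<ge> 1" by (simp add: n_def DIM_positive Suc_leI)
  then have "(n * a) ^ n = n ^ n * a ^ (n - 1) * a"
    using power_minus_mult[of n a] by (simp add: power_mult_distrib)
  then have measQ: "measure lebesgue Q \<le> V * a"
    using measure_rigid_cube_le[OF f, of a c] a by (simp add: Q_def V_def n_def mult_ac)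
  have bound: "V * x \<le> 4 * n ^ (n + 1) * unit_ball_vol n * a ^ (n - 1) * \<eta>"
    if "x \<le> 4 * n * \<eta>" for x
  proof -
    have "V * x \<le> V * (4 * n * \<eta>)"
      using that a by (intro mult_left_mono) (auto simp: V_def)
    then show ?thesis by (simp add: V_def mult_ac)
  qed
  show thesis
  proof (cases "a \<le> 4 * \<eta>")
    case True
    have "measure lebesgue (Q - {}) \<le> V * a"
      using measQ by simp
    also have "\<dots> \<le> 4 * n ^ (n + 1) * unit_ball_vol n * a ^ (n - 1) * \<eta>"
      using True \<open>n \<ge> 1\<close> \<eta> by (intro bound) (auto intro: order_trans[of a "4 * \<eta>"])
    finally show thesis
      by (intro that[of "{}"]) (auto simp: cube_piece_def n_def Q_def)
  next
    case False
    define l where "l = 1 - 4 * \<eta> / a"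
    have l: "0 < l" "l \<le> 1" and la: "(1 - l) * a = 4 * \<eta>"
      using False a \<eta> by (auto simp: l_def field_simps)
    define s where "s = (\<lambda>y. l *\<^sub>R y + (1 - l) *\<^sub>R (c + f ((a/2) *\<^sub>R One))) ` Q"
    note shrink = central_shrink_rigid_cube[where c = c, OF f a l]
    have "s \<subseteq> {z. z \<bullet> e \<le> h - (1 - l) * a / 2}"
      unfolding s_def Q_def by (rule shrink(4)[OF Qh e])
    then have halfspace: "s \<subseteq> {z. z \<bullet> e < h - \<eta>}"
      using la \<eta> by auto
    have "measure lebesgue (Q - s) \<le> n * (1 - l) * measure lebesgue Q"
      unfolding s_def Q_def n_def by (rule shrink(3))
    also have "\<dots> \<le> n * (1 - l) * (V * a)"
      using measQ l by (intro mult_left_mono) auto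
    also have "\<dots> = V * (n * ((1 - l) * a))"
      by (simp add: mult_ac)
    also have "\<dots> \<le> 4 * n ^ (n + 1) * unit_ball_vol n * a ^ (n - 1) * \<eta>"
      using la by (intro bound) simp
    finally show thesis
      using shrink(1,2) halfspace by (intro that[of s]) (auto simp: cube_piece_def n_def Q_def s_def)
  qed
qed

lemma cube_piece_shrink_into_halfspace:
  fixes Q :: "'a::euclidean_space set" and B :: real
  assumes Q: "cube_piece Q" and QB: "Q \<subseteq> cball 0 B" and Qh: "Q \<subseteq> {z. z \<bullet> e \<le> h}"
    and e: "norm e = 1" and \<eta>: "\<eta> > 0" and B: "B \<ge> 0"
  obtains s where "cube_piece s" "s \<subseteq> Q" "s \<subseteq> {z. z \<bullet> e < h - \<eta>}"
    "measure lebesgue (Q - s)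
       \<le> 4 * DIM('a) ^ (DIM('a) + 1) * unit_ball_vol DIM('a) * (2 * B) ^ (DIM('a) - 1) * \<eta>"
proof (cases "Q = {}")
  case True
  then show thesis using B \<eta> by (intro that[of "{}"]) (auto simp: cube_piece_def)
next
  case False
  then obtain c a f where a: "a > 0" and f: "orthogonal_transformation f" and Q_eq: "Q = rigid_cube c f a"
    using Q by (auto simp: cube_piece_def oriented_cube_iff_rigid_cube)
  have "a ^ (DIM('a) - 1) \<le> (2 * B) ^ (DIM('a) - 1)"
    using rigid_cube_side_le[OF f _ QB[unfolded Q_eq]] a by (intro power_mono) auto
  moreover obtain s where "cube_piece s" "s \<subseteq> Q" "s \<subseteq> {z. z \<bullet> e < h - \<eta>}"
    "measure lebesgue (Q - s)
       \<le> 4 * DIM('a) ^ (DIM('a) + 1) * unit_ball_vol DIM('a) * a ^ (DIM('a) - 1) * \<eta>"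
    using rigid_cube_shrink_into_halfspace[OF f a Qh[unfolded Q_eq] e \<eta>] unfolding Q_eq by metis
  ultimately show thesis
    using \<eta> by (intro that[of s]) (auto elim!: order_trans intro!: mult_left_mono mult_right_mono)
qed

lemma cube_piece_predecessor_in_halfspace:
  fixes Q :: "'a::euclidean_space set" and B :: real
  defines "M \<equiv> 4 * DIM('a) ^ (DIM('a) + 1) * unit_ball_vol DIM('a) * (2 * B) ^ (DIM('a) - 1)"
  assumes Q: "cube_piece Q" and QB: "Q \<subseteq> cball 0 B" and Qh: "Q \<subseteq> {z. z \<bullet> e \<le> h}"
    and e: "norm e = 1" and \<epsilon>: "\<epsilon> > 0" and B: "B \<ge> 0"
  obtains s where "cube_piece s" "s \<subseteq> {z. z \<bullet> e < h - \<epsilon> / (M + 1)}" "eps_predecessor \<epsilon> s Q"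
proof -
  have "M \<ge> 0" using B by (simp add: M_def)
  then have pos: "\<epsilon> / (M + 1) > 0" and loss: "M * (\<epsilon> / (M + 1)) < \<epsilon>"
    using \<epsilon> by (simp_all add: field_simps)
  obtain s where "cube_piece s" "s \<subseteq> Q" "s \<subseteq> {z. z \<bullet> e < h - \<epsilon> / (M + 1)}"
      "measure lebesgue (Q - s) \<le> M * (\<epsilon> / (M + 1))"
    using cube_piece_shrink_into_halfspace[OF Q QB Qh e pos B, folded M_def] by blast
  with loss show thesis by (intro that[of s]) (auto simp: eps_predecessor_def)
qed

lemma knife_function_halfspace_sweep:
  assumes "C \<in> sets borel" and "\<forall>x\<in>C. \<bar>x \<bullet> e\<bar> < L"
  shows "knife_function C {} C (\<lambda>t. C \<inter> {x. x \<bullet> e \<le> L * (2 * t - 1)})"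
  unfolding knife_function_def
proof (intro conjI ballI impI)
  fix t :: real
  have "closed {x. x \<bullet> e \<le> L * (2 * t - 1)}"
    using closed_halfspace_le[of e] by (simp add: inner_commute)
  then show "C \<inter> {x. x \<bullet> e \<le> L * (2 * t - 1)} \<in> sets borel"
    using assms(1) by auto
next
  fix t t' :: real assume "t \<le> t'"
  then show "C \<inter> {x. x \<bullet> e \<le> L * (2 * t - 1)} \<subseteq> C \<inter> {x. x \<bullet> e \<le> L * (2 * t' - 1)}"
    using assms(2) by (auto elim!: order_trans intro!: mult_left_mono)
qed (use assms(2) in force)+

lemma S_continuousI:
  assumes "\<And>\<epsilon>. \<epsilon> > 0 \<Longrightarrow> \<delta> \<epsilon> > 0"
    and "\<And>\<epsilon> t t' s'. \<epsilon> > 0 \<Longrightarrow> \<bar>t' - t\<bar> < \<delta> \<epsilon> \<Longrightarrow> S s' \<Longrightarrow> s' \<subseteq> K t'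
          \<Longrightarrow> \<exists>s. S s \<and> s \<subseteq> K t \<and> eps_predecessor \<epsilon> s s'"
    and "\<And>\<epsilon> t t' s'. \<epsilon> > 0 \<Longrightarrow> \<bar>t' - t\<bar> < \<delta> \<epsilon> \<Longrightarrow> S s' \<Longrightarrow> s' \<subseteq> C - K t'
          \<Longrightarrow> \<exists>s. S s \<and> s \<subseteq> C - K t \<and> eps_predecessor \<epsilon> s s'"
  shows "S_continuous S C K"
  unfolding S_continuous_def
proof (intro allI impI)
  fix \<epsilon> :: real
  assume "\<epsilon> > 0"
  then show "\<exists>\<delta>>0. \<forall>t\<in>{0..1}. \<forall>t'\<in>{0..1}. \<bar>t' - t\<bar> < \<delta> \<longrightarrow>
      (\<forall>s'. S s' \<and> s' \<subseteq> K t' \<longrightarrow> (\<exists>s. S s \<and> s \<subseteq> K t \<and> eps_predecessor \<epsilon> s s')) \<and>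
      (\<forall>s'. S s' \<and> s' \<subseteq> C - K t' \<longrightarrow> (\<exists>s. S s \<and> s \<subseteq> C - K t \<and> eps_predecessor \<epsilon> s s'))"
    using assms by (intro exI[of _ "\<delta> \<epsilon>"]) auto
qed

lemma S_continuous_halfspace_sweep:
  fixes C :: "'a::euclidean_space set"
  assumes C: "C \<subseteq> cball 0 B" and e: "norm e = 1" and L: "L > 0" and B: "B \<ge> 0"
  shows "S_continuous cube_piece C (\<lambda>t. C \<inter> {x. x \<bullet> e \<le> L * (2 * t - 1)})"
proof -
  define M where "M = 4 * DIM('a) ^ (DIM('a) + 1) * unit_ball_vol DIM('a) * (2 * B) ^ (DIM('a) - 1)"
  have "M \<ge> 0" using B by (simp add: M_def)
  define \<delta> where "\<delta> \<epsilon> = \<epsilon> / (2 * L * (M + 1))" for \<epsilon>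
  have \<delta>_pos: "\<delta> \<epsilon> > 0" if "\<epsilon> > 0" for \<epsilon>
    using that L \<open>M \<ge> 0\<close> by (simp add: \<delta>_def)
  have \<eta>: "\<epsilon> / (M + 1) = 2 * L * \<delta> \<epsilon>" for \<epsilon>
    using L \<open>M \<ge> 0\<close> by (simp add: \<delta>_def)
  have lower: "\<exists>s. cube_piece s \<and> s \<subseteq> C \<inter> {x. x \<bullet> e \<le> L * (2 * t - 1)} \<and> eps_predecessor \<epsilon> s s'"
    if \<epsilon>: "\<epsilon> > 0" and tt: "\<bar>t' - t\<bar> < \<delta> \<epsilon>"
      and s': "cube_piece s'" "s' \<subseteq> C \<inter> {x. x \<bullet> e \<le> L * (2 * t' - 1)}"
    for \<epsilon> t t' s'
  proof -
    have d: "t' - t \<le> \<delta> \<epsilon>" using tt by linarith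
    have shift: "L * (2 * t' - 1) - 2 * L * \<delta> \<epsilon> \<le> L * (2 * t - 1)"
      using mult_left_mono[OF d, of L] L by (simp add: algebra_simps)
    have s'_in: "s' \<subseteq> cball 0 B" "s' \<subseteq> {z. z \<bullet> e \<le> L * (2 * t' - 1)}" using s'(2) C by auto
    obtain s where s: "cube_piece s" "s \<subseteq> {z. z \<bullet> e < L * (2 * t' - 1) - 2 * L * \<delta> \<epsilon>}"
      "eps_predecessor \<epsilon> s s'"
      using cube_piece_predecessor_in_halfspace[OF s'(1) s'_in e \<epsilon> B, folded M_def, unfolded \<eta>] by blast
    have "s \<subseteq> C \<inter> {x. x \<bullet> e \<le> L * (2 * t - 1)}"
      using s(2,3) s'(2) shift by (auto simp: eps_predecessor_def)
    with s show ?thesis by blast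
  qed
  have upper: "\<exists>s. cube_piece s \<and> s \<subseteq> C - C \<inter> {x. x \<bullet> e \<le> L * (2 * t - 1)} \<and> eps_predecessor \<epsilon> s s'"
    if \<epsilon>: "\<epsilon> > 0" and tt: "\<bar>t' - t\<bar> < \<delta> \<epsilon>"
      and s': "cube_piece s'" "s' \<subseteq> C - C \<inter> {x. x \<bullet> e \<le> L * (2 * t' - 1)}"
    for \<epsilon> t t' s'
  proof -
    have d: "t - t' \<le> \<delta> \<epsilon>" using tt by linarith
    have shift: "L * (2 * t - 1) \<le> L * (2 * t' - 1) + 2 * L * \<delta> \<epsilon>"
      using mult_left_mono[OF d, of L] L by (simp add: algebra_simps)
    have s'_in: "s' \<subseteq> cball 0 B" "s' \<subseteq> {z. z \<bullet> (- e) \<le> - L * (2 * t' - 1)}" using s'(2) C by auto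
    have e': "norm (- e) = 1" using e by simp
    obtain s where s: "cube_piece s"
      "s \<subseteq> {z. z \<bullet> (- e) < - L * (2 * t' - 1) - 2 * L * \<delta> \<epsilon>}" "eps_predecessor \<epsilon> s s'"
      using cube_piece_predecessor_in_halfspace[OF s'(1) s'_in e' \<epsilon> B, folded M_def, unfolded \<eta>] by blast
    have "s \<subseteq> C - C \<inter> {x. x \<bullet> e \<le> L * (2 * t - 1)}"
      using s(2,3) s'(2) shift by (auto simp: eps_predecessor_def)
    with s show ?thesis by blast
  qed
  show ?thesis
    by (rule S_continuousI[OF \<delta>_pos lower upper])
qed

theorem mainTheorem18:
  fixes C :: "'a::euclidean_space set"
  assumes "C \<in> sets borel" and "bounded C"
  shows "\<exists>K. knife_function C {} C K \<and> S_continuous cube_piece C K"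
proof -
  obtain B where B: "B > 0" "\<forall>x\<in>C. norm x \<le> B"
    using assms(2) by (auto simp: bounded_pos)
  then have CB: "C \<subseteq> cball 0 B" by auto
  obtain e :: 'a where "e \<in> Basis" using nonempty_Basis by blast
  then have e: "norm e = 1" by simp
  have "\<bar>x \<bullet> e\<bar> < B + 1" if "x \<in> C" for x
    using Basis_le_norm[OF \<open>e \<in> Basis\<close>, of x] B(2) that by fastforce
  then have "knife_function C {} C (\<lambda>t. C \<inter> {x. x \<bullet> e \<le> (B + 1) * (2 * t - 1)})"
    by (intro knife_function_halfspace_sweep assms(1) ballI)
  moreover have "S_continuous cube_piece C (\<lambda>t. C \<inter> {x. x \<bullet> e \<le> (B + 1) * (2 * t - 1)})"
    using B(1) by (intro S_continuous_halfspace_sweep[OF CB e]) auto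
  ultimately show ?thesis by blast
qed

end
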